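(* Assume $F$ is $K$-smooth with $\ell\in\mathrm{int}(K)$ and strongly $K$-convex with $\mu\in\mathrm{int}(K)$. Let $\{x^k\}$ be generated by Algorithm 6 where, for each $k\ge1$, $e_k:=\frac{(JF(x^k)-JF(x^{k-1}))(x^k-x^{k-1})}{\|x^k-x^{k-1}\|^2}$ (and $e_0\in\mathrm{int}(K)$ arbitrary), assumed not to terminate. Then for every $k\ge1$: (i) $\mu\preceq_K e_k\preceq_K\ell$ (in particular $e_k\in\mathrm{int}(K)$); (ii) $t_k\ge\min_{c^*\in C_e}\gamma\langle c^*,e_k\rangle/\langle c^*,\ell\rangle$.
   Context: $K\subset\mathbb{R}^m$ closed convex pointed cone with nonempty interior; $y\preceq_K y'$ iff $y'-y\in K$. $K^*=\{c:\langle c,y\rangle\ge0\ \forall y\in K\}$; for $e\in\mathrm{int}(K)$, $C_e:=\{c^*\in K^*:\langle c^*,e\rangle=1\}$. $F:\mathbb{R}^n\to\mathbb{R}^m$ differentiable with Jacobian $JF$. Strongly $K$-convex with $\mu$: $JF(x)(y-x)+\tfrac12\|y-x\|^2\mu\preceq_K F(y)-F(x)$ $\forall x,y$; $K$-smooth with $\ell$: $F(y)-F(x)\preceq_K JF(x)(y-x)+\tfrac12\|y-x\|^2\ell$ $\forall x,y$. Algorithm 6: given $x^0$, $\gamma\in(0,1)$, for $k=0,1,\dots$: choose $e_k\in\mathrm{int}(K)$; $d^k:=\arg\min_d\max_{c^*\in C_e}\langle c^*,JF(x^k)d+\tfrac12\|d\|^2e_k\rangle$; if $d^k=0$ stop;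 otherwise $t_k:=\max\{\gamma^j:j\in\mathbb{N},\ F(x^k+\gamma^jd^k)-F(x^k)\preceq_K\gamma^j(JF(x^k)d^k+\tfrac12\|d^k\|^2e_k)\}$, $x^{k+1}:=x^k+t_kd^k$. *)

theory Defs
  imports "HOL-Analysis.Analysis"
begin

definition proper_cone :: "'b::euclidean_space set \<Rightarrow> bool" where
  "proper_cone K \<longleftrightarrow> closed K \<and> convex K \<and> cone K \<and>
     (\<forall>y. y \<in> K \<and> - y \<in> K \<longrightarrow> y = 0) \<and> interior K \<noteq> {}"

definition kle :: "'b::real_vector set \<Rightarrow> 'b \<Rightarrow> 'b \<Rightarrow> bool" where
  "kle K y y' \<longleftrightarrow> y' - y \<in> K"

definition dual_cone :: "'b::real_inner set \<Rightarrow> 'b set" where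
  "dual_cone K = {c. \<forall>y\<in>K. 0 \<le> c \<bullet> y}"

definition Cset :: "'b::real_inner set \<Rightarrow> 'b \<Rightarrow> 'b set" where
  "Cset K e = {c \<in> dual_cone K. c \<bullet> e = 1}"

definition strongly_K_convex ::
  "'b::euclidean_space set \<Rightarrow> ('a::euclidean_space \<Rightarrow> 'b) \<Rightarrow> ('a \<Rightarrow> 'a \<Rightarrow> 'b) \<Rightarrow> 'b \<Rightarrow> bool" where
  "strongly_K_convex K F JF \<mu> \<longleftrightarrow>
     (\<forall>x y. kle K (JF x (y - x) + ((1/2) * (norm (y - x))\<^sup>2) *\<^sub>R \<mu>) (F y - F x))"

definition K_smooth ::
  "'b::euclidean_space set \<Rightarrow> ('a::euclidean_space \<Rightarrow> 'b) \<Rightarrow> ('a \<Rightarrow> 'a \<Rightarrow> 'b) \<Rightarrow> 'b \<Rightarrow> bool" where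
  "K_smooth K F JF l \<longleftrightarrow>
     (\<forall>x y. kle K (F y - F x) (JF x (y - x) + ((1/2) * (norm (y - x))\<^sup>2) *\<^sub>R l))"

definition dir_obj ::
  "'b::euclidean_space set \<Rightarrow> 'b \<Rightarrow> ('a::euclidean_space \<Rightarrow> 'b) \<Rightarrow> 'b \<Rightarrow> 'a \<Rightarrow> real" where
  "dir_obj K e A ek d = (SUP c\<in>Cset K e. c \<bullet> (A d + ((1/2) * (norm d)\<^sup>2) *\<^sub>R ek))"

definition armijo_set ::
  "'b::euclidean_space set \<Rightarrow> ('a::euclidean_space \<Rightarrow> 'b) \<Rightarrow> ('a \<Rightarrow> 'a \<Rightarrow> 'b) \<Rightarrow> real \<Rightarrow> 'a \<Rightarrow> 'a \<Rightarrow> 'b \<Rightarrow> real set" where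
  "armijo_set K F JF \<gamma> x d ek =
     {\<gamma> ^ j | j. kle K (F (x + (\<gamma> ^ j) *\<^sub>R d) - F x)
                       ((\<gamma> ^ j) *\<^sub>R (JF x d + ((1/2) * (norm d)\<^sup>2) *\<^sub>R ek))}"

end

theory Submission
  imports Defs
begin

text \<open>
  Writing \<open>v = x\<^sub>k - x\<^sub>k\<^sub>-\<^sub>1\<close>, adding the strong \<open>K\<close>-convexity inequalities for the pairs
  \<open>(x\<^sub>k\<^sub>-\<^sub>1, x\<^sub>k)\<close> and \<open>(x\<^sub>k, x\<^sub>k\<^sub>-\<^sub>1)\<close> cancels the function values and leaves
  \<open>\<parallel>v\<parallel>\<^sup>2 \<mu> \<preceq>\<^sub>K (JF(x\<^sub>k) - JF(x\<^sub>k\<^sub>-\<^sub>1)) v\<close>; the same with \<open>K\<close>-smoothness gives the upper bound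
  by \<open>\<parallel>v\<parallel>\<^sup>2 \<ell>\<close>. For (ii), \<open>K\<close>-smoothness shows that the Armijo condition holds for
  every step \<open>s\<close> with \<open>s \<ell> \<preceq>\<^sub>K e\<^sub>k\<close>, and by the bipolar theorem (\<open>K\<close> is closed) this is
  the case as soon as \<open>s \<le> \<langle>c\<^sup>*, e\<^sub>k\<rangle> / \<langle>c\<^sup>*, \<ell>\<rangle>\<close> for all \<open>c\<^sup>* \<in> C\<^sub>e\<close>. Backtracking stops
  at the first power of \<open>\<gamma>\<close> below that threshold, hence at most a factor \<open>\<gamma>\<close> too early.
\<close>


lemma proper_cone_imp_convex_cone: "proper_cone K \<Longrightarrow> convex_cone K"
  unfolding proper_cone_def convex_cone_def conic_def cone_def
  using interior_subset by blast

lemma convex_cone_interior_add: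
  fixes K :: "'a::real_normed_vector set"
  assumes K: "convex_cone K" and a: "a \<in> interior K" and b: "b \<in> K"
  shows "a + b \<in> interior K"
proof -
  obtain r where r: "r > 0" "ball a r \<subseteq> K" using a by (meson mem_interior)
  have "ball (a + b) r \<subseteq> K"
  proof
    fix y assume "y \<in> ball (a + b) r"
    then have "y - b \<in> K" using r by (auto simp: dist_norm algebra_simps)
    then show "y \<in> K" using convex_cone_add[OF K _ b] by fastforce
  qed
  then show ?thesis using r by (meson mem_interior)
qed

lemma mem_closed_convex_cone_if_dual_nonneg:
  fixes K :: "'a::euclidean_space set"
  assumes "closed K" "convex_cone K" and y: "\<And>c. c \<in> dual_cone K \<Longrightarrow> 0 \<le> c \<bullet> y"
  shows "y \<in> K"
proof (rule ccontr)
  assume "y \<notin> K"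
  moreover have "convex K" using assms(2) unfolding convex_cone_def by blast
  ultimately obtain a b where ab: "a \<bullet> y < b" "\<forall>x\<in>K. b < a \<bullet> x"
    using separating_hyperplane_closed_point[of K y] assms(1) by blast
  have b: "b < 0" using ab convex_cone_contains_0[OF assms(2)] by force
  have "a \<in> dual_cone K"
    unfolding dual_cone_def
  proof (clarify, rule ccontr)
    fix x assume x: "x \<in> K" and "\<not> 0 \<le> a \<bullet> x"
    then have "(b / (a \<bullet> x)) *\<^sub>R x \<in> K"
      using b by (intro convex_cone_scaleR[OF assms(2)]) (auto simp: divide_nonpos_neg)
    then show False using ab(2) \<open>\<not> 0 \<le> a \<bullet> x\<close> by fastforce
  qed
  then show False using y ab b by fastforce
qed

lemma dual_cone_inner_interior_pos:
  assumes c: "c \<in> dual_cone K" "c \<noteq> 0" and w: "w \<in> interior K"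
  shows "0 < c \<bullet> w"
proof -
  obtain r where r: "r > 0" "ball w r \<subseteq> K" using w by (meson mem_interior)
  define z where "z = w - (r / 2 / norm c) *\<^sub>R c"
  have "z \<in> K" using r c unfolding z_def by (auto simp: dist_norm)
  then have "0 \<le> c \<bullet> z" using c unfolding dual_cone_def by blast
  also have "c \<bullet> z = c \<bullet> w - r / 2 * norm c"
    unfolding z_def using c by (simp add: inner_diff_right dot_square_norm power2_eq_square)
  finally have "r / 2 * norm c \<le> c \<bullet> w" by simp
  moreover have "0 < r / 2 * norm c" using r c by simp
  ultimately show ?thesis by linarith
qed

lemma normalized_dual_mem_Cset:
  assumes "c \<in> dual_cone K" "c \<noteq> 0" "e \<in> interior K"
  shows "(1 / (c \<bullet> e)) *\<^sub>R c \<in> Cset K e"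
  using assms dual_cone_inner_interior_pos[OF assms] unfolding Cset_def dual_cone_def by auto

lemma Cset_inner_interior_pos: "c \<in> Cset K e \<Longrightarrow> w \<in> interior K \<Longrightarrow> 0 < c \<bullet> w"
  using dual_cone_inner_interior_pos unfolding Cset_def by fastforce

lemma Cset_inner_nonneg: "c \<in> Cset K e \<Longrightarrow> y \<in> K \<Longrightarrow> 0 \<le> c \<bullet> y"
  unfolding Cset_def dual_cone_def by blast

lemma mem_closed_convex_cone_if_Cset_nonneg:
  fixes K :: "'a::euclidean_space set"
  assumes "closed K" "convex_cone K" "e \<in> interior K" and y: "\<And>c. c \<in> Cset K e \<Longrightarrow> 0 \<le> c \<bullet> y"
  shows "y \<in> K"
proof (rule mem_closed_convex_cone_if_dual_nonneg[OF assms(1,2)])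
  fix c assume c: "c \<in> dual_cone K"
  show "0 \<le> c \<bullet> y"
  proof (cases "c = 0")
    case False
    have "0 \<le> (1 / (c \<bullet> e)) * (c \<bullet> y)"
      using y[OF normalized_dual_mem_Cset[OF c False assms(3)]] by simp
    then show ?thesis using dual_cone_inner_interior_pos[OF c False assms(3)]
      by (simp add: zero_le_divide_iff)
  qed simp
qed

lemma Cset_nonempty:
  fixes K :: "'a::euclidean_space set"
  assumes "closed K" "convex_cone K" "K \<noteq> UNIV" "e \<in> interior K"
  shows "Cset K e \<noteq> {}"
  using assms mem_closed_convex_cone_if_Cset_nonneg by (metis UNIV_eq_I empty_iff)

lemma proper_cone_neq_UNIV: "proper_cone (K :: 'a::euclidean_space set) \<Longrightarrow> K \<noteq> UNIV"
proof
  obtain y :: 'a where "y \<noteq> 0" using nonzero_Basis by blast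
  moreover assume "proper_cone K" "K = UNIV"
  ultimately show False unfolding proper_cone_def by blast
qed


definition secant_curvature :: "('a::real_normed_vector \<Rightarrow> 'a \<Rightarrow> 'b::real_vector) \<Rightarrow> 'a \<Rightarrow> 'a \<Rightarrow> 'b" where
  "secant_curvature JF x y = (1 / (norm (y - x))\<^sup>2) *\<^sub>R (JF y (y - x) - JF x (y - x))"

lemma kle_scaleR: "convex_cone K \<Longrightarrow> 0 \<le> c \<Longrightarrow> kle K a b \<Longrightarrow> kle K (c *\<^sub>R a) (c *\<^sub>R b)"
  unfolding kle_def by (metis convex_cone_scaleR scaleR_diff_right)

lemma kle_add: "convex_cone K \<Longrightarrow> kle K a b \<Longrightarrow> kle K a' b' \<Longrightarrow> kle K (a + a') (b + b')"
  unfolding kle_def by (metis convex_cone_add add_diff_add)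

lemma kle_secant_curvature_if_kle:
  assumes K: "convex_cone K" and "x \<noteq> y"
    and "kle K ((norm (y - x))\<^sup>2 *\<^sub>R a) (JF y (y - x) - JF x (y - x))"
  shows "kle K a (secant_curvature JF x y)"
  using kle_scaleR[OF K _ assms(3), of "1 / (norm (y - x))\<^sup>2"] assms(2)
  unfolding secant_curvature_def by simp

lemma secant_curvature_kle_if_kle:
  assumes K: "convex_cone K" and "x \<noteq> y"
    and "kle K (JF y (y - x) - JF x (y - x)) ((norm (y - x))\<^sup>2 *\<^sub>R a)"
  shows "kle K (secant_curvature JF x y) a"
  using kle_scaleR[OF K _ assms(3), of "1 / (norm (y - x))\<^sup>2"] assms(2)
  unfolding secant_curvature_def by simp

lemma strongly_K_convex_kle_secant_curvature:
  assumes K: "convex_cone K" and F: "strongly_K_convex K F JF \<mu>"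
    and lin: "linear (JF y)" and "x \<noteq> y"
  shows "kle K \<mu> (secant_curvature JF x y)"
proof (rule kle_secant_curvature_if_kle[OF K \<open>x \<noteq> y\<close>])
  have "kle K (JF x (y - x) + ((1/2) * (norm (y - x))\<^sup>2) *\<^sub>R \<mu>
            + (JF y (x - y) + ((1/2) * (norm (x - y))\<^sup>2) *\<^sub>R \<mu>))
          (F y - F x + (F x - F y))"
    using F K kle_add unfolding strongly_K_convex_def by blast
  moreover have "JF y (x - y) = - JF y (y - x)"
    using linear_neg[OF lin] by (metis minus_diff_eq)
  ultimately show "kle K ((norm (y - x))\<^sup>2 *\<^sub>R \<mu>) (JF y (y - x) - JF x (y - x))"
    unfolding kle_def by (simp add: norm_minus_commute algebra_simps flip: scaleR_add_left)
qed

lemma K_smooth_secant_curvature_kle: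
  assumes K: "convex_cone K" and F: "K_smooth K F JF l"
    and lin: "linear (JF y)" and "x \<noteq> y"
  shows "kle K (secant_curvature JF x y) l"
proof (rule secant_curvature_kle_if_kle[OF K \<open>x \<noteq> y\<close>])
  have "kle K (F y - F x + (F x - F y))
          (JF x (y - x) + ((1/2) * (norm (y - x))\<^sup>2) *\<^sub>R l
            + (JF y (x - y) + ((1/2) * (norm (x - y))\<^sup>2) *\<^sub>R l))"
    using F K kle_add unfolding K_smooth_def by blast
  moreover have "JF y (x - y) = - JF y (y - x)"
    using linear_neg[OF lin] by (metis minus_diff_eq)
  ultimately show "kle K (JF y (y - x) - JF x (y - x)) ((norm (y - x))\<^sup>2 *\<^sub>R l)"
    unfolding kle_def by (simp add: norm_minus_commute algebra_simps flip: scaleR_add_left)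
qed


lemma K_smooth_armijo_condition:
  assumes K: "convex_cone K" and F: "K_smooth K F JF l" and lin: "linear (JF x)"
    and s: "0 \<le> s" and sl: "kle K (s *\<^sub>R l) ek"
  shows "kle K (F (x + s *\<^sub>R d) - F x) (s *\<^sub>R (JF x d + ((1/2) * (norm d)\<^sup>2) *\<^sub>R ek))"
proof -
  have "kle K (F (x + s *\<^sub>R d) - F x) (JF x (s *\<^sub>R d) + ((1/2) * (norm (s *\<^sub>R d))\<^sup>2) *\<^sub>R l)"
    using F unfolding K_smooth_def by (metis add_diff_cancel_left')
  then have "kle K (F (x + s *\<^sub>R d) - F x + ((1/2) * s * (norm d)\<^sup>2) *\<^sub>R (s *\<^sub>R l))
          (JF x (s *\<^sub>R d) + ((1/2) * (norm (s *\<^sub>R d))\<^sup>2) *\<^sub>R l + ((1/2) * s * (norm d)\<^sup>2) *\<^sub>R ek)"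
    using s by (intro kle_add[OF K] kle_scaleR[OF K _ sl]) auto
  then show ?thesis
    unfolding kle_def using linear_cmul[OF lin] s
    by (simp add: power_mult_distrib algebra_simps power2_eq_square)
qed

lemma backtracking_step_ge:
  fixes \<gamma> m :: real
  assumes \<gamma>: "0 < \<gamma>" "\<gamma> < 1" and m: "m \<le> 1"
    and accept: "\<And>s. 0 < s \<Longrightarrow> \<gamma> * s \<le> m \<Longrightarrow> P s"
    and t: "t \<in> {\<gamma> ^ j | j. P (\<gamma> ^ j)}" and t_max: "\<forall>s \<in> {\<gamma> ^ j | j. P (\<gamma> ^ j)}. s \<le> t"
  shows "m \<le> t"
proof (cases "m \<le> 0")
  case True
  have "0 < t" using t \<gamma> by auto
  then show ?thesis using True by linarith
next
  case False
  define j where "j = (LEAST j. \<gamma> ^ j \<le> m / \<gamma>)"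
  have "\<exists>j. \<gamma> ^ j < m / \<gamma>" using real_arch_pow_inv[of "m / \<gamma>" \<gamma>] False \<gamma> by simp
  then have j: "\<gamma> ^ j \<le> m / \<gamma>" unfolding j_def by (metis LeastI less_eq_real_def)
  then have "\<gamma> ^ j \<le> t"
    using t_max accept[of "\<gamma> ^ j"] \<gamma> by (auto simp: pos_le_divide_eq mult.commute)
  moreover have "m \<le> \<gamma> ^ j"
  proof (cases j)
    case (Suc i)
    then have "\<not> \<gamma> ^ i \<le> m / \<gamma>" using not_less_Least[of i "\<lambda>j. \<gamma> ^ j \<le> m / \<gamma>"] unfolding j_def by simp
    then have "m < \<gamma> * \<gamma> ^ i" using \<gamma> by (simp add: not_le divide_less_eq mult.commute)
    then show ?thesis using Suc by simp
  qed (use m in simp)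
  ultimately show ?thesis by linarith
qed

lemma Cset_ratio_bdd_below:
  assumes "y \<in> K" "l \<in> interior K" "0 \<le> \<gamma>"
  shows "bdd_below ((\<lambda>c. \<gamma> * (c \<bullet> y) / (c \<bullet> l)) ` Cset K e)"
proof (rule bdd_belowI2[where m = 0])
  fix c assume c: "c \<in> Cset K e"
  show "0 \<le> \<gamma> * (c \<bullet> y) / (c \<bullet> l)"
    using Cset_inner_nonneg[OF c assms(1)] Cset_inner_interior_pos[OF c assms(2)] assms(3) by simp
qed

lemma kle_scaleR_if_le_Cset_INF:
  fixes K :: "'a::euclidean_space set"
  assumes K: "closed K" "convex_cone K" and e: "e \<in> interior K"
    and y: "y \<in> K" and l: "l \<in> interior K" and \<gamma>: "0 < \<gamma>"
    and s: "\<gamma> * s \<le> (INF c\<in>Cset K e. \<gamma> * (c \<bullet> y) / (c \<bullet> l))"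
  shows "kle K (s *\<^sub>R l) y"
  unfolding kle_def
proof (rule mem_closed_convex_cone_if_Cset_nonneg[OF K e])
  fix c assume c: "c \<in> Cset K e"
  have "(INF c\<in>Cset K e. \<gamma> * (c \<bullet> y) / (c \<bullet> l)) \<le> \<gamma> * (c \<bullet> y) / (c \<bullet> l)"
    using Cset_ratio_bdd_below[OF y l] \<gamma> c by (intro cINF_lower) auto
  then have "\<gamma> * s \<le> \<gamma> * ((c \<bullet> y) / (c \<bullet> l))"
    using s by simp
  then show "0 \<le> c \<bullet> (y - s *\<^sub>R l)"
    using \<gamma> Cset_inner_interior_pos[OF c l] by (simp add: inner_diff_right pos_le_divide_eq)
qed

lemma Cset_INF_ratio_le_one:
  assumes "Cset K e \<noteq> {}" "y \<in> K" "kle K y l" "l \<in> interior K" "0 \<le> \<gamma>" "\<gamma> \<le> 1"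
  shows "(INF c\<in>Cset K e. \<gamma> * (c \<bullet> y) / (c \<bullet> l)) \<le> 1"
proof -
  obtain c where c: "c \<in> Cset K e" using assms(1) by blast
  have "0 \<le> c \<bullet> (l - y)" "0 \<le> c \<bullet> y" "0 < c \<bullet> l"
    using Cset_inner_nonneg[OF c] assms(2,3) Cset_inner_interior_pos[OF c assms(4)]
    by (auto simp: kle_def)
  then have "\<gamma> * (c \<bullet> y) / (c \<bullet> l) \<le> 1"
    using assms(5,6) mult_left_le_one_le[of "c \<bullet> y" \<gamma>]
    by (simp add: inner_diff_right divide_le_eq)
  then show ?thesis
    using cINF_lower[OF Cset_ratio_bdd_below[OF assms(2,4,5)] c] by linarith
qed

theorem mainTheorem15:
  fixes K :: "'b::euclidean_space set"
    and F :: "'a::euclidean_space \<Rightarrow> 'b"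
    and JF :: "'a \<Rightarrow> 'a \<Rightarrow> 'b"
    and \<mu> l e :: 'b
    and \<gamma> :: real
    and x d :: "nat \<Rightarrow> 'a"
    and ee :: "nat \<Rightarrow> 'b"
    and t :: "nat \<Rightarrow> real"
  assumes K: "proper_cone K"
    and deriv: "\<And>z. (F has_derivative JF z) (at z)"
    and smooth: "K_smooth K F JF l" and l_int: "l \<in> interior K"
    and sconv: "strongly_K_convex K F JF \<mu>" and \<mu>_int: "\<mu> \<in> interior K"
    and e_int: "e \<in> interior K"
    and \<gamma>: "0 < \<gamma>" "\<gamma> < 1"
    and e0: "ee 0 \<in> interior K"
    and ek: "\<And>k. k \<ge> 1 \<Longrightarrow> ee k =
              (1 / (norm (x k - x (k - 1)))\<^sup>2) *\<^sub>R (JF (x k) (x k - x (k - 1)) - JF (x (k - 1)) (x k - x (k - 1)))"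
    and dmin: "\<And>k d'. dir_obj K e (JF (x k)) (ee k) (d k) \<le> dir_obj K e (JF (x k)) (ee k) d'"
    and nonterm: "\<And>k. d k \<noteq> 0"
    and tmax: "\<And>k. t k \<in> armijo_set K F JF \<gamma> (x k) (d k) (ee k)
                  \<and> (\<forall>s\<in>armijo_set K F JF \<gamma> (x k) (d k) (ee k). s \<le> t k)"
    and xnext: "\<And>k. x (Suc k) = x k + t k *\<^sub>R d k"
    and k1: "k \<ge> 1"
  shows "kle K \<mu> (ee k) \<and> kle K (ee k) l \<and> ee k \<in> interior K
         \<and> t k \<ge> (INF c\<in>Cset K e. \<gamma> * (c \<bullet> ee k) / (c \<bullet> l))"
proof -
  have Kc: "convex_cone K" and closed: "closed K" using K proper_cone_imp_convex_cone proper_cone_def by auto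
  have lin: "\<And>z. linear (JF z)" using deriv has_derivative_linear by blast
  obtain p where kp: "k = Suc p" using k1 by (cases k) auto
  have "0 < t p" using tmax[of p] \<gamma> unfolding armijo_set_def by auto
  then have step: "x p \<noteq> x k" using xnext[of p] nonterm[of p] kp by auto
  have eek: "ee k = secant_curvature JF (x p) (x k)"
    using ek[OF k1] kp unfolding secant_curvature_def by simp
  have lower: "kle K \<mu> (ee k)"
    unfolding eek using strongly_K_convex_kle_secant_curvature[OF Kc sconv lin step] .
  have upper: "kle K (ee k) l"
    unfolding eek using K_smooth_secant_curvature_kle[OF Kc smooth lin step] .
  have interior: "ee k \<in> interior K"
    using convex_cone_interior_add[OF Kc \<mu>_int lower[unfolded kle_def]] by simp
  then have eK: "ee k \<in> K" using interior_subset by blast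
  have "(INF c\<in>Cset K e. \<gamma> * (c \<bullet> ee k) / (c \<bullet> l)) \<le> t k"
  proof (rule backtracking_step_ge[OF \<gamma>])
    show "(INF c\<in>Cset K e. \<gamma> * (c \<bullet> ee k) / (c \<bullet> l)) \<le> 1"
      using \<gamma> by (intro Cset_INF_ratio_le_one[OF Cset_nonempty[OF closed Kc proper_cone_neq_UNIV[OF K] e_int]
          eK upper l_int]) auto
    show "kle K (F (x k + s *\<^sub>R d k) - F (x k)) (s *\<^sub>R (JF (x k) (d k) + ((1/2) * (norm (d k))\<^sup>2) *\<^sub>R ee k))"
      if "0 < s" "\<gamma> * s \<le> (INF c\<in>Cset K e. \<gamma> * (c \<bullet> ee k) / (c \<bullet> l))" for s
      using that \<gamma> by (intro K_smooth_armijo_condition[OF Kc smooth lin]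
          kle_scaleR_if_le_Cset_INF[OF closed Kc e_int eK l_int]) auto
  qed (use tmax[of k] in \<open>simp_all add: armijo_set_def\<close>)
  then show ?thesis using lower upper interior by simp
qed

end
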